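(* Let $T\in\mathbb{C}^{l\times l}$ and let $\lambda_1,\lambda_2,\lambda_3$ be three distinct eigenvalues of $T$. Then for all $\gamma=(\gamma_{12},\gamma_{13},\gamma_{23})\in\mathbb{C}^3$, \[ \operatorname{rank}\begin{bmatrix} T-\lambda_1 I_l & \gamma_{12} I_l & \gamma_{13} I_l\\ 0 & T-\lambda_2 I_l & \gamma_{23} I_l\\ 0&0&T-\lambda_3 I_l\end{bmatrix}\le 3l-3 , \] equivalently $s_{3l-2}$ of this matrix equals $0$.
   Context: $s_j(\cdot)$ denotes the $j$-th largest singular value of a matrix ($s_1\ge s_2\ge\cdots$). *)

theory Defs
  imports "Jordan_Normal_Form.Char_Poly" "Jordan_Normal_Form.DL_Rank"
begin

definition block3_mat :: "nat \<Rightarrow> (nat \<Rightarrow> nat \<Rightarrow> 'a mat) \<Rightarrow> 'a mat" where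
  "block3_mat l B = mat (3*l) (3*l) (\<lambda>(i,j). B (i div l) (j div l) $$ (i mod l, j mod l))"

end

theory Submission
  imports Defs
begin

(* Let M be the block matrix and v an eigenvector of T for lam. M maps the block vector
  c (x) v = (c0 v, c1 v, c2 v) to (S c) (x) v, where S is the scalar upper triangular matrix
  obtained from M by replacing T with lam. For lam = mu_m the distinctness of the mu's leaves
  a single zero on the diagonal of S, at position m, so back substitution gives a null vector
  c_m of S with c_m m = 1 and c_m q = 0 for q > m. Choosing a coordinate p_m at which the
  eigenvector v_m for mu_m is nonzero, the three kernel vectors c_m (x) v_m are in echelon
  form with respect to the columns m l + p_m; hence these three columns lie in the span of
  the remaining 3 l - 3 columns. *)

lemma sum_lessThan_mult_blocks:
  fixes f :: "nat \<Rightarrow> 'a::comm_monoid_add"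
  shows "(\<Sum>j<m*l. f j) = (\<Sum>q<m. \<Sum>s<l. f (q*l + s))"
proof -
  have "(\<Sum>j\<in>{q*l..<q*l+l}. f j) = (\<Sum>s<l. f (q*l + s))" for q
    using sum.shift_bounds_nat_ivl[of f 0 "q*l" l] by (simp add: add.commute lessThan_atLeast0)
  then show ?thesis using sum.nat_group[of "\<lambda>q. f q" l m] by simp
qed

lemma sum_lessThan_3:
  fixes f :: "nat \<Rightarrow> 'a::comm_monoid_add"
  shows "(\<Sum>q<3. f q) = f 0 + f 1 + f 2"
proof -
  have "{..<3::nat} = {0, 1, 2}" by auto
  then show ?thesis by (simp add: add.assoc)
qed

lemma mult_add_less_mult:
  fixes q s l m :: nat
  assumes "q < m" "s < l"
  shows "q*l + s < m*l"
proof -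
  have "q*l + s < Suc q * l" using assms(2) by simp
  also have "\<dots> \<le> m*l" using assms(1) by (intro mult_le_mono1) simp
  finally show ?thesis .
qed

section \<open>Block vectors\<close>

definition block3_vec :: "nat \<Rightarrow> (nat \<Rightarrow> 'a vec) \<Rightarrow> 'a vec" where
  "block3_vec l U = vec (3*l) (\<lambda>j. U (j div l) $ (j mod l))"

lemma block3_vec_carrier [simp]: "block3_vec l U \<in> carrier_vec (3*l)"
  by (simp add: block3_vec_def)

lemma block3_vec_index:
  assumes "q < 3" "s < l"
  shows "block3_vec l U $ (q*l + s) = U q $ s"
  using assms mult_add_less_mult[OF assms] by (simp add: block3_vec_def)

lemma block3_mat_mult_vec_index:
  assumes B: "\<And>p q. p < 3 \<Longrightarrow> q < 3 \<Longrightarrow> B p q \<in> carrier_mat l l"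
    and U: "\<And>q. q < 3 \<Longrightarrow> U q \<in> carrier_vec l"
    and p: "p < 3" and r: "r < l"
  shows "(block3_mat l B *\<^sub>v block3_vec l U) $ (p*l + r) = (\<Sum>q<3. (B p q *\<^sub>v U q) $ r)"
proof -
  have "(block3_mat l B *\<^sub>v block3_vec l U) $ (p*l + r)
      = (\<Sum>j<3*l. B p (j div l) $$ (r, j mod l) * block3_vec l U $ j)"
    using mult_add_less_mult[OF p r] r
    by (simp add: block3_mat_def mult_mat_vec_def scalar_prod_def lessThan_atLeast0
        carrier_vecD[OF block3_vec_carrier])
  also have "\<dots> = (\<Sum>q<3. \<Sum>s<l. B p q $$ (r, s) * U q $ s)"
    by (simp add: sum_lessThan_mult_blocks block3_vec_index)
  also have "\<dots> = (\<Sum>q<3. (B p q *\<^sub>v U q) $ r)"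
  proof (rule sum.cong)
    fix q :: nat assume "q \<in> {..<3}"
    then have "B p q \<in> carrier_mat l l" "U q \<in> carrier_vec l" using B[OF p] U by auto
    then show "(\<Sum>s<l. B p q $$ (r, s) * U q $ s) = (B p q *\<^sub>v U q) $ r"
      using r by (simp add: mult_mat_vec_def scalar_prod_def lessThan_atLeast0)
  qed simp
  finally show ?thesis .
qed

lemma block3_mat_mult_tensor_eigenvector:
  fixes B :: "nat \<Rightarrow> nat \<Rightarrow> 'a::field mat"
  assumes B: "\<And>p q. p < 3 \<Longrightarrow> q < 3 \<Longrightarrow> B p q \<in> carrier_mat l l"
    and v: "v \<in> carrier_vec l"
    and eig: "\<And>p q. p < 3 \<Longrightarrow> q < 3 \<Longrightarrow> B p q *\<^sub>v v = \<beta> p q \<cdot>\<^sub>v v"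
    and null: "\<And>p. p < 3 \<Longrightarrow> (\<Sum>q<3. \<beta> p q * c q) = 0"
  shows "block3_mat l B *\<^sub>v block3_vec l (\<lambda>q. c q \<cdot>\<^sub>v v) = 0\<^sub>v (3*l)"
proof (rule eq_vecI)
  fix i assume "i < dim_vec (0\<^sub>v (3*l) :: 'a vec)"
  then have i: "i < 3*l" by simp
  define p r where "p = i div l" and "r = i mod l"
  have p: "p < 3" and r: "r < l" and ipr: "i = p*l + r"
    using i by (auto simp: p_def r_def less_mult_imp_div_less)
  have "(block3_mat l B *\<^sub>v block3_vec l (\<lambda>q. c q \<cdot>\<^sub>v v)) $ i
      = (\<Sum>q<3. (B p q *\<^sub>v (c q \<cdot>\<^sub>v v)) $ r)"
    unfolding ipr using B v p r by (intro block3_mat_mult_vec_index) auto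
  also have "\<dots> = (\<Sum>q<3. \<beta> p q * c q * v $ r)"
  proof (rule sum.cong)
    fix q :: nat assume "q \<in> {..<3}"
    then have "B p q \<in> carrier_mat l l" "B p q *\<^sub>v v = \<beta> p q \<cdot>\<^sub>v v" using B[OF p] eig[OF p] by auto
    then have "B p q *\<^sub>v (c q \<cdot>\<^sub>v v) = (c q * \<beta> p q) \<cdot>\<^sub>v v"
      using v by (simp add: mult_mat_vec[of _ l l] smult_smult_assoc)
    then show "(B p q *\<^sub>v (c q \<cdot>\<^sub>v v)) $ r = \<beta> p q * c q * v $ r"
      using v r by simp
  qed simp
  also have "\<dots> = (\<Sum>q<3. \<beta> p q * c q) * v $ r" by (simp add: sum_distrib_right)
  also have "\<dots> = 0" using null[OF p] by simp
  finally show "(block3_mat l B *\<^sub>v block3_vec l (\<lambda>q. c q \<cdot>\<^sub>v v)) $ i = 0\<^sub>v (3*l) $ i"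
    using i by simp
qed (simp add: block3_mat_def)

section \<open>Rank bounds from kernel vectors\<close>

context vec_space
begin

lemma col_combination_in_span:
  assumes M: "M \<in> carrier_mat n nc" and G: "G \<subseteq> carrier_vec n" and I: "finite I"
    and cols: "\<And>i. i \<in> I \<Longrightarrow> i < nc \<and> col M i \<in> span G"
  shows "vec n (\<lambda>r. \<Sum>i\<in>I. c i * M $$ (r, i)) \<in> span G"
  using I cols
proof (induction I rule: finite_induct)
  case empty
  then show ?case
    using submodule.zero_closed[OF span_is_submodule[OF G]] by (simp add: module_vec_simps zero_vec_def)
next
  case (insert a I)
  have "vec n (\<lambda>r. \<Sum>i\<in>insert a I. c i * M $$ (r, i))
      = c a \<cdot>\<^sub>v col M a + vec n (\<lambda>r. \<Sum>i\<in>I. c i * M $$ (r, i))"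
    using insert M by auto
  then show ?case using insert span_add1[OF G] smult_in_span[OF G] by auto
qed

lemma col_in_span_of_kernel_vec:
  assumes M: "M \<in> carrier_mat n nc" and x: "x \<in> carrier_vec nc" and Mx: "M *\<^sub>v x = 0\<^sub>v n"
    and j: "j < nc" and xj: "x $ j \<noteq> 0" and G: "G \<subseteq> carrier_vec n"
    and support: "\<And>i. i < nc \<Longrightarrow> i \<noteq> j \<Longrightarrow> x $ i \<noteq> 0 \<Longrightarrow> col M i \<in> span G"
  shows "col M j \<in> span G"
proof -
  define I where "I = {i. i < nc \<and> i \<noteq> j \<and> x $ i \<noteq> 0}"
  define w where "w = vec n (\<lambda>r. \<Sum>i\<in>I. x $ i * M $$ (r, i))"
  have w: "w \<in> span G"
    unfolding w_def by (rule col_combination_in_span[OF M G]) (auto simp: I_def support)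
  have "col M j = (- 1 / x $ j) \<cdot>\<^sub>v w"
  proof (rule eq_vecI)
    fix r assume "r < dim_vec ((- 1 / x $ j) \<cdot>\<^sub>v w)"
    then have r: "r < n" by (simp add: w_def)
    have "0 = (M *\<^sub>v x) $ r" using Mx r by simp
    also have "\<dots> = (\<Sum>i<nc. x $ i * M $$ (r, i))"
      using M x r by (simp add: mult_mat_vec_def scalar_prod_def lessThan_atLeast0 mult.commute)
    also have "\<dots> = (\<Sum>i\<in>insert j I. x $ i * M $$ (r, i))"
      by (rule sum.mono_neutral_right) (auto simp: I_def j)
    also have "\<dots> = x $ j * M $$ (r, j) + w $ r"
      using r by (simp add: I_def w_def)
    finally show "col M j $ r = ((- 1 / x $ j) \<cdot>\<^sub>v w) $ r"
      using M j r xj by (simp add: field_simps eq_neg_iff_add_eq_0 w_def)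
  qed (use M in \<open>simp add: w_def\<close>)
  then show ?thesis using smult_in_span[OF G w] by simp
qed

lemma dim_span_le_card:
  assumes "S \<subseteq> carrier_vec n" and "finite S"
  shows "vectorspace.dim class_ring (span_vs S) \<le> card S"
proof -
  have vs: "vectorspace class_ring (span_vs S)"
    using assms span_is_subspace subspace_is_vs by simp
  have S: "S \<subseteq> span S" using assms in_own_span by simp
  have "LinearCombinations.module.span class_ring (span_vs S) S = carrier (span_vs S)"
    using span_li_not_depend(1)[OF S span_is_submodule] assms by auto
  then show ?thesis using vectorspace.gen_ge_dim[OF vs assms(2)] S by simp
qed

lemma rank_le_card_spanning_cols:
  assumes M: "M \<in> carrier_mat n nc" and GM: "G \<subseteq> set (cols M)"
    and spans: "set (cols M) \<subseteq> span G"
  shows "rank M \<le> card G"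
proof -
  have G: "G \<subseteq> carrier_vec n" using GM M cols_dim by blast
  have "span (set (cols M)) = span G"
    using span_is_monotone[OF GM] span_subsetI[OF G spans] by blast
  then show ?thesis
    unfolding rank_def using dim_span_le_card[OF G] finite_subset[OF GM] by simp
qed

lemma rank_le_by_kernel_echelon:
  assumes M: "M \<in> carrier_mat n nc"
    and piv: "inj_on piv {..<k}" "\<And>m. m < k \<Longrightarrow> piv m < nc"
    and x: "\<And>m. m < k \<Longrightarrow> x m \<in> carrier_vec nc" "\<And>m. m < k \<Longrightarrow> M *\<^sub>v x m = 0\<^sub>v n"
    and pivot: "\<And>m. m < k \<Longrightarrow> x m $ piv m \<noteq> 0"
    and echelon: "\<And>m m'. m < m' \<Longrightarrow> m' < k \<Longrightarrow> x m $ piv m' = 0"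
  shows "rank M \<le> nc - k"
proof -
  define J where "J = piv ` {..<k}"
  define G where "G = col M ` ({..<nc} - J)"
  have G: "G \<subseteq> carrier_vec n" using M by (auto simp: G_def)
  have free: "col M i \<in> span G" if "i < nc" "i \<notin> J" for i
    using span_mem[OF G] that by (auto simp: G_def)
  have pivots: "col M (piv m) \<in> span G" if "m < k" for m
    using that
  proof (induction m rule: less_induct)
    case (less m)
    show ?case
    proof (rule col_in_span_of_kernel_vec[OF M x(1,2)[OF less.prems] piv(2) pivot G])
      fix i assume i: "i < nc" "i \<noteq> piv m" "x m $ i \<noteq> 0"
      show "col M i \<in> span G"
      proof (cases "i \<in> J")
        case True
        then obtain m' where m': "m' < k" "i = piv m'" by (auto simp: J_def)
        then have "m' < m" using i echelon[of m m'] by (cases m m' rule: linorder_cases) auto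
        then show ?thesis using less.IH less.prems m' by simp
      qed (use free i in simp)
    qed (use less.prems in simp_all)
  qed
  have GM: "G \<subseteq> set (cols M)" using M by (auto simp: G_def cols_def)
  have "col M i \<in> span G" if "i < nc" for i
    using free[OF that] pivots by (cases "i \<in> J") (auto simp: J_def)
  then have "set (cols M) \<subseteq> span G" using M by (auto simp: cols_def)
  then have "rank M \<le> card G" by (rule rank_le_card_spanning_cols[OF M GM])
  also have "\<dots> \<le> card ({..<nc} - J)" unfolding G_def by (rule card_image_le) simp
  also have "\<dots> = nc - k"
    using piv by (subst card_Diff_subset) (auto simp: J_def card_image)
  finally show ?thesis .
qed

end

lemma rank_block3_mat_le_by_tensor_kernel:
  fixes B :: "nat \<Rightarrow> nat \<Rightarrow> 'a::field mat"
  assumes v: "\<And>m. m < 3 \<Longrightarrow> v m \<in> carrier_vec l"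
    and piv: "\<And>m. m < 3 \<Longrightarrow> piv m < l" "\<And>m. m < 3 \<Longrightarrow> v m $ piv m \<noteq> 0"
    and C: "\<And>m. m < 3 \<Longrightarrow> C m m \<noteq> 0" "\<And>m q. m < q \<Longrightarrow> C m q = 0"
    and kernel: "\<And>m. m < 3 \<Longrightarrow> block3_mat l B *\<^sub>v block3_vec l (\<lambda>q. C m q \<cdot>\<^sub>v v m) = 0\<^sub>v (3*l)"
  shows "vec_space.rank (3*l) (block3_mat l B) \<le> 3*l - 3"
proof -
  interpret vec_space "TYPE('a)" "3*l" .
  have piv_div: "(m*l + piv m) div l = m" if "m < 3" for m using piv(1)[OF that] by simp
  show ?thesis
  proof (rule rank_le_by_kernel_echelon[OF _ _ _ _ kernel, where piv = "\<lambda>m. m*l + piv m"])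
    show "inj_on (\<lambda>m. m*l + piv m) {..<3}" by (rule inj_onI) (metis piv_div lessThan_iff)
    show "m*l + piv m < 3*l" if "m < 3" for m using mult_add_less_mult[OF that piv(1)[OF that]] .
    show "block3_vec l (\<lambda>q. C m q \<cdot>\<^sub>v v m) $ (m*l + piv m) \<noteq> 0" if "m < 3" for m
    proof -
      have "v m \<in> carrier_vec l" "piv m < l" using that v piv(1) by auto
      then show ?thesis using that piv(2) C(1) by (simp add: block3_vec_index)
    qed
    show "block3_vec l (\<lambda>q. C m q \<cdot>\<^sub>v v m) $ (m'*l + piv m') = 0" if "m < m'" "m' < 3" for m m'
    proof -
      have "v m \<in> carrier_vec l" "piv m' < l" using that v piv(1) by auto
      then show ?thesis using that by (simp add: block3_vec_index C(2))
    qed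
  qed (simp_all add: block3_mat_def)
qed

section \<open>The block upper triangular matrix\<close>

lemma smult_one_mat_mult_vec:
  assumes "w \<in> carrier_vec l"
  shows "(c \<cdot>\<^sub>m 1\<^sub>m l) *\<^sub>v w = (c :: 'a::field) \<cdot>\<^sub>v w"
proof -
  have "c \<cdot>\<^sub>v w = c \<cdot>\<^sub>v (1\<^sub>m l *\<^sub>v w)" using assms by simp
  also have "\<dots> = (c \<cdot>\<^sub>m 1\<^sub>m l) *\<^sub>v w" using assms by auto
  finally show ?thesis by simp
qed

lemma shifted_mat_mult_eigenvector:
  assumes T: "T \<in> carrier_mat l l" and w: "w \<in> carrier_vec l" and Tw: "T *\<^sub>v w = lam \<cdot>\<^sub>v w"
  shows "(T - mu \<cdot>\<^sub>m 1\<^sub>m l) *\<^sub>v w = (lam - mu :: 'a::field) \<cdot>\<^sub>v w"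
proof -
  have "(T - mu \<cdot>\<^sub>m 1\<^sub>m l) *\<^sub>v w = lam \<cdot>\<^sub>v w - mu \<cdot>\<^sub>v w"
    using T w by (simp add: minus_mult_distrib_mat_vec[of _ l l] Tw smult_one_mat_mult_vec)
  also have "\<dots> = (lam - mu) \<cdot>\<^sub>v w" using w by (intro eq_vecI) (auto simp: algebra_simps)
  finally show ?thesis .
qed

lemma zero_smult_vec_carrier: "w \<in> carrier_vec l \<Longrightarrow> (0 :: 'a::field) \<cdot>\<^sub>v w = 0\<^sub>v l"
  by (intro eq_vecI) auto

definition upper_triangular_blocks ::
    "nat \<Rightarrow> 'a::field mat \<Rightarrow> 'a \<Rightarrow> 'a \<Rightarrow> 'a \<Rightarrow> 'a \<Rightarrow> 'a \<Rightarrow> 'a \<Rightarrow> nat \<Rightarrow> nat \<Rightarrow> 'a mat" where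
  "upper_triangular_blocks l T mu1 mu2 mu3 g12 g13 g23 = (\<lambda>p q.
              if p = 0 \<and> q = 0 then T - mu1 \<cdot>\<^sub>m 1\<^sub>m l
              else if p = 0 \<and> q = 1 then g12 \<cdot>\<^sub>m 1\<^sub>m l
              else if p = 0 \<and> q = 2 then g13 \<cdot>\<^sub>m 1\<^sub>m l
              else if p = 1 \<and> q = 1 then T - mu2 \<cdot>\<^sub>m 1\<^sub>m l
              else if p = 1 \<and> q = 2 then g23 \<cdot>\<^sub>m 1\<^sub>m l
              else if p = 2 \<and> q = 2 then T - mu3 \<cdot>\<^sub>m 1\<^sub>m l
              else 0\<^sub>m l l)"

lemma upper_triangular_blocks_mult_tensor_eigenvector:
  assumes T: "T \<in> carrier_mat l l" and w: "w \<in> carrier_vec l" and Tw: "T *\<^sub>v w = lam \<cdot>\<^sub>v w"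
    and null: "(lam - mu1) * c 0 + g12 * c 1 + g13 * c 2 = 0"
      "(lam - mu2) * c 1 + g23 * c 2 = 0" "(lam - mu3) * c 2 = 0"
  shows "block3_mat l (upper_triangular_blocks l T mu1 mu2 mu3 g12 g13 g23)
           *\<^sub>v block3_vec l (\<lambda>q. c q \<cdot>\<^sub>v w) = 0\<^sub>v (3*l)"
proof (rule block3_mat_mult_tensor_eigenvector[OF _ w,
      where \<beta> = "\<lambda>p q. [[lam - mu1, g12, g13], [0, lam - mu2, g23], [0, 0, lam - mu3]] ! p ! q"])
  fix p q :: nat assume "p < 3" "q < 3"
  then have "p = 0 \<or> p = 1 \<or> p = 2" "q = 0 \<or> q = 1 \<or> q = 2" by linarith+
  then show "upper_triangular_blocks l T mu1 mu2 mu3 g12 g13 g23 p q \<in> carrier_mat l l"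
    and "upper_triangular_blocks l T mu1 mu2 mu3 g12 g13 g23 p q *\<^sub>v w
      = [[lam - mu1, g12, g13], [0, lam - mu2, g23], [0, 0, lam - mu3]] ! p ! q \<cdot>\<^sub>v w"
    using T w shifted_mat_mult_eigenvector[OF T w Tw] smult_one_mat_mult_vec[OF w]
      zero_smult_vec_carrier[OF w]
    by (auto simp: upper_triangular_blocks_def)
next
  fix p :: nat assume "p < 3"
  then have "p = 0 \<or> p = 1 \<or> p = 2" by linarith
  then show "(\<Sum>q<3. [[lam - mu1, g12, g13], [0, lam - mu2, g23], [0, 0, lam - mu3]] ! p ! q * c q) = 0"
    using null by (elim disjE) (simp_all add: sum_lessThan_3)
qed

lemma upper_triangular3_echelon_null_vectors:
  fixes mu :: "nat \<Rightarrow> 'a::field" and g12 g13 g23 :: 'a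
  assumes "mu 0 \<noteq> mu 1" "mu 0 \<noteq> mu 2" "mu 1 \<noteq> mu 2"
  obtains C :: "nat \<Rightarrow> nat \<Rightarrow> 'a" where
    "\<And>m. C m m = 1" "\<And>m q. m < q \<Longrightarrow> C m q = 0"
    "\<And>m. m < 3 \<Longrightarrow> (mu m - mu 0) * C m 0 + g12 * C m 1 + g13 * C m 2 = 0"
    "\<And>m. m < 3 \<Longrightarrow> (mu m - mu 1) * C m 1 + g23 * C m 2 = 0"
    "\<And>m. m < 3 \<Longrightarrow> (mu m - mu 2) * C m 2 = 0"
proof
  have nz: "mu 1 - mu 0 \<noteq> 0" "mu 2 - mu 1 \<noteq> 0" "mu 2 - mu 0 \<noteq> 0" using assms by auto
  define a2 b3 a3 where "a2 = - g12 / (mu 1 - mu 0)" and "b3 = - g23 / (mu 2 - mu 1)"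
    and "a3 = - (g12 * b3 + g13) / (mu 2 - mu 0)"
  have e1: "(mu 1 - mu 0) * a2 = - g12" and e2: "(mu 2 - mu 1) * b3 = - g23"
    and e3: "(mu 2 - mu 0) * a3 = - (g12 * b3 + g13)"
    using nz by (simp_all add: a2_def b3_def a3_def)
  define C where "C m q = (if q = m then 1 else if m < q then 0
    else if m = 1 then a2 else if q = 1 then b3 else a3)" for m q :: nat
  show "C m m = 1" for m by (simp add: C_def)
  show "m < q \<Longrightarrow> C m q = 0" for m q by (simp add: C_def)
  fix m :: nat assume "m < 3"
  then have "m = 0 \<or> m = 1 \<or> m = 2" by linarith
  then show "(mu m - mu 0) * C m 0 + g12 * C m 1 + g13 * C m 2 = 0"
    and "(mu m - mu 1) * C m 1 + g23 * C m 2 = 0"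
    and "(mu m - mu 2) * C m 2 = 0"
    using e1 e2 e3 by (auto simp: C_def)
qed

lemma eigenvalues_obtain_eigenvectors:
  assumes T: "T \<in> carrier_mat l l" and eig: "\<And>m. m < k \<Longrightarrow> eigenvalue T (mu m)"
  obtains v i where "\<And>m. m < k \<Longrightarrow> v m \<in> carrier_vec l" "\<And>m. m < k \<Longrightarrow> T *\<^sub>v v m = mu m \<cdot>\<^sub>v v m"
    "\<And>m. m < k \<Longrightarrow> i m < l" "\<And>m. m < k \<Longrightarrow> v m $ i m \<noteq> 0"
proof -
  have "\<exists>v i. v \<in> carrier_vec l \<and> T *\<^sub>v v = mu m \<cdot>\<^sub>v v \<and> i < l \<and> v $ i \<noteq> 0" if m: "m < k" for m
  proof -
    obtain v where v: "v \<in> carrier_vec l" "v \<noteq> 0\<^sub>v l" "T *\<^sub>v v = mu m \<cdot>\<^sub>v v"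
      using T eig[OF m] unfolding eigenvalue_def eigenvector_def by auto
    then obtain i where "i < l" "v $ i \<noteq> 0" by (metis carrier_vecD eq_vecI index_zero_vec(1,2))
    then show ?thesis using v by blast
  qed
  then show ?thesis using that by metis
qed

theorem mainTheorem1:
  fixes T :: "complex mat" and l :: nat and mu1 mu2 mu3 g12 g13 g23 :: complex
  assumes "T \<in> carrier_mat l l"
    and "eigenvalue T mu1" and "eigenvalue T mu2" and "eigenvalue T mu3"
    and "mu1 \<noteq> mu2" and "mu1 \<noteq> mu3" and "mu2 \<noteq> mu3"
  shows "vec_space.rank (3*l)
           (block3_mat l (\<lambda>p q.
              if p = 0 \<and> q = 0 then T - mu1 \<cdot>\<^sub>m 1\<^sub>m l
              else if p = 0 \<and> q = 1 then g12 \<cdot>\<^sub>m 1\<^sub>m l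
              else if p = 0 \<and> q = 2 then g13 \<cdot>\<^sub>m 1\<^sub>m l
              else if p = 1 \<and> q = 1 then T - mu2 \<cdot>\<^sub>m 1\<^sub>m l
              else if p = 1 \<and> q = 2 then g23 \<cdot>\<^sub>m 1\<^sub>m l
              else if p = 2 \<and> q = 2 then T - mu3 \<cdot>\<^sub>m 1\<^sub>m l
              else 0\<^sub>m l l))
         \<le> 3*l - 3"
proof -
  define mu where "mu m = [mu1, mu2, mu3] ! m" for m
  have mu: "mu 0 = mu1" "mu 1 = mu2" "mu 2 = mu3" by (simp_all add: mu_def)
  have eig: "eigenvalue T (mu m)" if "m < 3" for m
  proof -
    have "m = 0 \<or> m = 1 \<or> m = 2" using that by linarith
    then show ?thesis using assms(2-4) mu by auto
  qed
  obtain v piv where v: "\<And>m. m < 3 \<Longrightarrow> v m \<in> carrier_vec l" "\<And>m. m < 3 \<Longrightarrow> T *\<^sub>v v m = mu m \<cdot>\<^sub>v v m"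
    and piv: "\<And>m. m < 3 \<Longrightarrow> piv m < l" "\<And>m. m < 3 \<Longrightarrow> v m $ piv m \<noteq> 0"
    by (rule eigenvalues_obtain_eigenvectors[where k = 3 and mu = mu, OF assms(1) eig]) (assumption, rule that)
  have "mu 0 \<noteq> mu 1" "mu 0 \<noteq> mu 2" "mu 1 \<noteq> mu 2" using assms(5-7) unfolding mu .
  then obtain C where C: "\<And>m. C m m = 1" "\<And>m q. m < q \<Longrightarrow> C m q = 0"
    "\<And>m. m < 3 \<Longrightarrow> (mu m - mu 0) * C m 0 + g12 * C m 1 + g13 * C m 2 = 0"
    "\<And>m. m < 3 \<Longrightarrow> (mu m - mu 1) * C m 1 + g23 * C m 2 = 0"
    "\<And>m. m < 3 \<Longrightarrow> (mu m - mu 2) * C m 2 = 0"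
    by (rule upper_triangular3_echelon_null_vectors[of mu g12 g13 g23]) (rule that)
  have "vec_space.rank (3*l) (block3_mat l (upper_triangular_blocks l T mu1 mu2 mu3 g12 g13 g23))
      \<le> 3*l - 3"
  proof (rule rank_block3_mat_le_by_tensor_kernel[OF v(1) piv])
    show "C m m \<noteq> 0" for m using C(1) by simp
    show "m < q \<Longrightarrow> C m q = 0" for m q using C(2) .
    show "block3_mat l (upper_triangular_blocks l T mu1 mu2 mu3 g12 g13 g23)
        *\<^sub>v block3_vec l (\<lambda>q. C m q \<cdot>\<^sub>v v m) = 0\<^sub>v (3*l)" if "m < 3" for m
      using upper_triangular_blocks_mult_tensor_eigenvector[OF assms(1) v[OF that] C(3-5)[OF that, unfolded mu]] .
  qed
  then show ?thesis unfolding upper_triangular_blocks_def .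
qed

end
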